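(* Let $1\le\ell\le n$. For every $u\in\mathbb{R}^{\binom{n}{\ell}}$, $\|\mathbf{V}(u)\|_F^2\le \ell^2\|u\|^4$.
   Context: Vectors in $\mathbb{R}^{\binom{n}{\ell}}$ are indexed by subsets $S\subseteq[n]$ with $|S|=\ell$. The voting matrix $\mathbf{V}(u)$ is the symmetric $n\times n$ matrix with $\mathbf{V}_{ii}(u)=0$ and, for $i\ne j$, $\mathbf{V}_{ij}(u)=\frac12\sum_{|S|=|T|=\ell} u_Su_T\mathbf{1}_{S\triangle T=\{i,j\}}$. $\|\cdot\|_F$ is the Frobenius norm. *)

theory Defs
  imports Main "HOL-Analysis.Analysis"
begin

text \<open>Index set of vectors in R^(n choose l): l-subsets of [n] = {0..<n}.\<close>
definition lsubsets :: "nat \<Rightarrow> nat \<Rightarrow> nat set set" where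
  "lsubsets n l = {S. S \<subseteq> {..<n} \<and> card S = l}"

definition voting_matrix :: "nat \<Rightarrow> nat \<Rightarrow> (nat set \<Rightarrow> real) \<Rightarrow> nat \<Rightarrow> nat \<Rightarrow> real" where
  "voting_matrix n l u i j =
     (if i = j then 0
      else (1/2) * (\<Sum>S\<in>lsubsets n l. \<Sum>T\<in>lsubsets n l.
                      (if (S - T) \<union> (T - S) = {i, j} then u S * u T else 0)))"

definition frob_norm_sq :: "nat \<Rightarrow> (nat \<Rightarrow> nat \<Rightarrow> real) \<Rightarrow> real" where
  "frob_norm_sq n M = (\<Sum>i<n. \<Sum>j<n. (M i j)^2)"

definition vec_norm_sq :: "nat \<Rightarrow> nat \<Rightarrow> (nat set \<Rightarrow> real) \<Rightarrow> real" where
  "vec_norm_sq n l u = (\<Sum>S\<in>lsubsets n l. (u S)^2)"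

end

theory Submission
  imports Defs
begin

(*
  Grouping the pairs (S, T) with S - T and T - S the singletons {i}, {j} by R = S \<inter> T, an
  (l-1)-set, writes V(u) as the sum over R of the off-diagonal part of the rank-one matrix
  a_R a_R^T, where a_R i = u (R \<union> {i}) for i outside R and 0 on R.  The off-diagonal part of
  a a^T has Frobenius norm at most |a|^2, so by the triangle inequality
  |V(u)|_F \<le> sum over R of |a_R|^2, and this sum is l |u|^2 because every l-set arises as
  R \<union> {i} in exactly l ways.
*)

lemma L2_set_sum_le: "L2_set (\<lambda>x. \<Sum>k\<in>K. f k x) A \<le> (\<Sum>k\<in>K. L2_set (f k) A)"
proof (induction K rule: infinite_finite_induct)
  case (insert k K)
  have "L2_set (\<lambda>x. \<Sum>k\<in>insert k K. f k x) A = L2_set (\<lambda>x. f k x + (\<Sum>k\<in>K. f k x)) A"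
    using insert by simp
  also have "\<dots> \<le> L2_set (f k) A + L2_set (\<lambda>x. \<Sum>k\<in>K. f k x) A"
    by (rule L2_set_triangle_ineq)
  also have "\<dots> \<le> (\<Sum>k\<in>insert k K. L2_set (f k) A)"
    using insert by simp
  finally show ?case .
qed (simp_all add: L2_set_def)

lemma L2_set_offdiag_outer_le:
  fixes a :: "'a \<Rightarrow> real"
  shows "L2_set (\<lambda>(i, j). if i = j then 0 else a i * a j) (A \<times> A) \<le> (\<Sum>i\<in>A. (a i)^2)"
proof -
  have "(\<Sum>(i, j)\<in>A \<times> A. (if i = j then 0 else a i * a j)^2) \<le> (\<Sum>(i, j)\<in>A \<times> A. (a i)^2 * (a j)^2)"
    by (rule sum_mono) (auto simp: power_mult_distrib)
  also have "\<dots> = (\<Sum>i\<in>A. (a i)^2)^2"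
    by (simp add: power2_eq_square sum_product sum.cartesian_product)
  finally show ?thesis
    unfolding L2_set_def by (simp add: case_prod_beta real_le_lsqrt sum_nonneg)
qed

lemma card_sym_diff_doubleton:
  assumes "finite S" "finite T" "card S = card T" "i \<noteq> j" "(S - T) \<union> (T - S) = {i, j}"
  shows "S - T = {i} \<and> T - S = {j} \<or> S - T = {j} \<and> T - S = {i}"
proof -
  have "card (S - T) = card (T - S)"
    using assms(1-3) card_le_sym_Diff by (metis le_antisym order_refl)
  moreover have "card ((S - T) \<union> (T - S)) = card (S - T) + card (T - S)"
    using assms(1,2) by (intro card_Un_disjoint) auto
  then have "card (S - T) + card (T - S) = 2"
    using assms(4,5) by simp
  ultimately obtain x y where "S - T = {x}" "T - S = {y}"
    by (metis card_1_singleton_iff One_nat_def add_self_div_2 one_add_one)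
  then show ?thesis
    using assms(4,5) by (auto simp: doubleton_eq_iff)
qed

lemma finite_lsubsets: "finite (lsubsets n l)"
  unfolding lsubsets_def by (rule finite_subset[of _ "Pow {..<n}"]) auto

lemma insert_in_lsubsets:
  assumes "R \<in> lsubsets n l" "i < n" "i \<notin> R"
  shows "insert i R \<in> lsubsets n (Suc l)"
  using assms finite_subset[of R "{..<n}"] by (auto simp: lsubsets_def)

lemma Diff_singleton_in_lsubsets:
  assumes "S \<in> lsubsets n (Suc l)" "i \<in> S"
  shows "S - {i} \<in> lsubsets n l"
  using assms by (auto simp: lsubsets_def)

lemma lsubsets_subset: "S \<in> lsubsets n l \<Longrightarrow> S \<subseteq> {..<n}"
  by (simp add: lsubsets_def)

lemma sym_diff_doubleton_pairs:
  fixes n l i j :: nat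
  assumes "i < n" "j < n" "i \<noteq> j"
  defines "K \<equiv> {R \<in> lsubsets n l. i \<notin> R \<and> j \<notin> R}"
  shows "{(S, T) \<in> lsubsets n (Suc l) \<times> lsubsets n (Suc l). (S - T) \<union> (T - S) = {i, j}}
    = (\<lambda>R. (insert i R, insert j R)) ` K \<union> (\<lambda>R. (insert j R, insert i R)) ` K"
    (is "?Q = ?K1 \<union> ?K2")
proof (intro equalityI subsetI)
  fix p assume "p \<in> ?Q"
  then obtain S T where p: "p = (S, T)" and S: "S \<in> lsubsets n (Suc l)" and T: "T \<in> lsubsets n (Suc l)"
    and ST: "(S - T) \<union> (T - S) = {i, j}" by auto
  have "finite S" "finite T" "card S = card T"
    using S T by (auto simp: lsubsets_def intro: finite_subset)
  from card_sym_diff_doubleton[OF this assms(3) ST]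
  show "p \<in> ?K1 \<union> ?K2"
  proof (elim disjE conjE)
    assume "S - T = {i}" "T - S = {j}"
    moreover from this have "S \<inter> T = S - {i}" by auto
    ultimately have "S \<inter> T \<in> K" "S = insert i (S \<inter> T)" "T = insert j (S \<inter> T)"
      using Diff_singleton_in_lsubsets[OF S, of i] by (auto simp: K_def)
    then show ?thesis using p by blast
  next
    assume "S - T = {j}" "T - S = {i}"
    moreover from this have "S \<inter> T = S - {j}" by auto
    ultimately have "S \<inter> T \<in> K" "S = insert j (S \<inter> T)" "T = insert i (S \<inter> T)"
      using Diff_singleton_in_lsubsets[OF S, of j] by (auto simp: K_def)
    then show ?thesis using p by blast
  qed
next
  fix p assume "p \<in> ?K1 \<union> ?K2"
  then obtain R where "R \<in> K" and p: "p = (insert i R, insert j R) \<or> p = (insert j R, insert i R)"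
    by auto
  then have "insert i R \<in> lsubsets n (Suc l)" "insert j R \<in> lsubsets n (Suc l)" "i \<notin> R" "j \<notin> R"
    using insert_in_lsubsets assms(1,2) by (auto simp: K_def)
  then show "p \<in> ?Q" using p assms(3) by auto
qed

definition link :: "(nat set \<Rightarrow> real) \<Rightarrow> nat set \<Rightarrow> nat \<Rightarrow> real" where
  "link u R i = (if i \<in> R then 0 else u (insert i R))"

lemma voting_matrix_eq_sum_link:
  assumes "i < n" "j < n" "i \<noteq> j"
  shows "voting_matrix n (Suc l) u i j = (\<Sum>R\<in>lsubsets n l. link u R i * link u R j)"
proof -
  define K where "K = {R \<in> lsubsets n l. i \<notin> R \<and> j \<notin> R}"
  let ?L = "lsubsets n (Suc l)"
  let ?f = "\<lambda>p. u (fst p) * u (snd p)"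
  have finK: "finite K" using finite_lsubsets[of n l] by (simp add: K_def)
  have inj: "inj_on (\<lambda>R. (insert k R, insert k' R)) K" if "k \<in> {i, j}" for k k'
    using that by (intro inj_onI) (auto simp: K_def insert_ident)
  have "(\<Sum>S\<in>?L. \<Sum>T\<in>?L. if (S - T) \<union> (T - S) = {i, j} then u S * u T else 0)
      = (\<Sum>p\<in>?L \<times> ?L. if (fst p - snd p) \<union> (snd p - fst p) = {i, j} then ?f p else 0)"
    by (simp add: sum.cartesian_product case_prod_beta)
  also have "\<dots> = sum ?f {p \<in> ?L \<times> ?L. (fst p - snd p) \<union> (snd p - fst p) = {i, j}}"
    by (rule sum.inter_filter[symmetric]) (simp add: finite_lsubsets)
  also have "\<dots> = sum ?f {(S, T) \<in> ?L \<times> ?L. (S - T) \<union> (T - S) = {i, j}}"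
    by (intro arg_cong[where f = "sum ?f"] Collect_cong) (simp split: prod.split)
  also have "\<dots> = sum ?f ((\<lambda>R. (insert i R, insert j R)) ` K \<union> (\<lambda>R. (insert j R, insert i R)) ` K)"
    using sym_diff_doubleton_pairs[OF assms] by (simp add: K_def)
  also have "\<dots> = sum ?f ((\<lambda>R. (insert i R, insert j R)) ` K) + sum ?f ((\<lambda>R. (insert j R, insert i R)) ` K)"
    using finK assms(3) by (intro sum.union_disjoint) (auto simp: K_def)
  also have "\<dots> = 2 * (\<Sum>R\<in>K. u (insert i R) * u (insert j R))"
    by (simp add: sum.reindex[OF inj] mult.commute)
  also have "(\<Sum>R\<in>K. u (insert i R) * u (insert j R)) = (\<Sum>R\<in>lsubsets n l. link u R i * link u R j)"
    unfolding K_def link_def by (auto simp: sum.inter_filter finite_lsubsets intro!: sum.cong)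
  finally show ?thesis
    using assms(3) by (simp add: voting_matrix_def)
qed

lemma sum_link_squares:
  "(\<Sum>R\<in>lsubsets n l. \<Sum>i<n. (link u R i)^2) = real (Suc l) * vec_norm_sq n (Suc l) u"
proof -
  let ?K = "lsubsets n l"
  let ?L = "lsubsets n (Suc l)"
  have "(\<Sum>R\<in>?K. \<Sum>i<n. (link u R i)^2) = (\<Sum>R\<in>?K. \<Sum>i\<in>{..<n} - R. (u (insert i R))^2)"
    by (intro sum.cong refl sum.mono_neutral_cong_right) (auto simp: link_def)
  also have "\<dots> = (\<Sum>(R, i)\<in>Sigma ?K (\<lambda>R. {..<n} - R). (u (insert i R))^2)"
    by (rule sum.Sigma) (simp_all add: finite_lsubsets)
  also have "\<dots> = (\<Sum>(S, i)\<in>Sigma ?L (\<lambda>S. S). (u S)^2)"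
    by (rule sum.reindex_bij_witness[where i = "\<lambda>(S, i). (S - {i}, i)" and j = "\<lambda>(R, i). (insert i R, i)"])
      (auto simp: insert_in_lsubsets Diff_singleton_in_lsubsets insert_absorb
        dest: lsubsets_subset)
  also have "\<dots> = (\<Sum>S\<in>?L. \<Sum>i\<in>S. (u S)^2)"
    by (rule sum.Sigma[symmetric]) (auto simp: finite_lsubsets lsubsets_def intro: finite_subset)
  also have "\<dots> = real (Suc l) * vec_norm_sq n (Suc l) u"
    by (simp add: vec_norm_sq_def sum_distrib_left lsubsets_def)
  finally show ?thesis .
qed

lemma frob_norm_sq_eq_L2_set:
  "frob_norm_sq n M = (L2_set (\<lambda>(i, j). M i j) ({..<n} \<times> {..<n}))^2"
  by (simp add: frob_norm_sq_def L2_set_def sum_nonneg sum.cartesian_product case_prod_beta)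

theorem lemma6:
  fixes n l :: nat and u :: "nat set \<Rightarrow> real"
  assumes "1 \<le> l" and "l \<le> n"
  shows "frob_norm_sq n (voting_matrix n l u) \<le> (real l)^2 * (vec_norm_sq n l u)^2"
proof -
  obtain k where l: "l = Suc k" using assms(1) by (cases l) auto
  let ?K = "lsubsets n k"
  let ?X = "{..<n} \<times> {..<n}"
  define M where "M R = (\<lambda>(i, j). if i = j then 0 else link u R i * link u R j)" for R
  have "L2_set (\<lambda>(i, j). voting_matrix n l u i j) ?X = L2_set (\<lambda>p. \<Sum>R\<in>?K. M R p) ?X"
    using voting_matrix_eq_sum_link[of _ n _ k u]
    by (intro L2_set_cong) (auto simp: M_def voting_matrix_def l)
  also have "\<dots> \<le> (\<Sum>R\<in>?K. L2_set (M R) ?X)"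
    by (rule L2_set_sum_le)
  also have "\<dots> \<le> (\<Sum>R\<in>?K. \<Sum>i<n. (link u R i)^2)"
    unfolding M_def by (intro sum_mono L2_set_offdiag_outer_le)
  also have "\<dots> = real l * vec_norm_sq n l u"
    unfolding l by (rule sum_link_squares)
  finally show ?thesis
    by (simp add: frob_norm_sq_eq_L2_set power_mult_distrib[symmetric] power_mono)
qed

end
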